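(* Let $\gamma$ be a planar strictly convex $C^2$ smooth closed curve and consider the Birkhoff billiard map $T$ in $\gamma$ on the phase cylinder $\mathbb{A}$ of oriented lines intersecting $\gamma$. Let $\mathcal{M}_L$ be the set swept by m-orbits for the generating function $L(s,s_1)=|\gamma(s_1)-\gamma(s)|$ in the coordinates $(s,\cos\delta)$, and $\mathcal{M}_S$ the set swept by m-orbits for the generating function $S(\varphi,\varphi_1)=2h(\psi)\sin\delta$, $\psi=\frac{\varphi+\varphi_1}{2}$, $\delta=\frac{\varphi_1-\varphi}{2}$, in the coordinates $(\varphi,p)$. Then $\mathcal{M}_L=\mathcal{M}_S$.
   Context: An oriented line meeting $\gamma$ at the point $\gamma(s)$ ($s$ arc length) with angle $\delta\in(0,\pi)$ to the tangent has coordinates $(s,\cos\delta)$; alternatively it has coordinates $(\varphi,p)$, where $\varphi$ is the angle between the right unit normal of the line and the horizontal direction and $p$ is the signed distance from the origin (an interior point) to the line. Both are symplectic coordinates on $\mathbb{A}$. $h$ is the support function of $\gamma$, $h(\psi)=\max_{X\in\gamma}\langle X,(\cos\psi,\sin\psi)\rangle$. Generating function convention: $T(s,\cos\delta)=(s_1,\cos\delta_1)$ iff $\cos\delta=-L_1(s,s_1)$, $\cos\delta_1=L_2(s,s_1)$; $T(\varphi,p)=(\varphi_1,p_1)$ iff $p=-S_1(\varphi,\varphi_1)$, $p_1=S_2(\varphi,\varphi_1)$; both satisfy $L_{12}>0$, $S_{12}>0$ (subscripts denote partial derivatives). For a generating function $H$ (either $L$ or $S$), a configuration $\{q_n\}_{n\in\mathbb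 Z}$ (first coordinates of an orbit) is an m-configuration if for any integers $M<N$ the segment $(q_{M+1},\dots,q_{N-1})$ is a local maximum of $\sum_{n=M}^{N-1}H(x_n,x_{n+1})$ with fixed end points $x_M=q_M$, $x_N=q_N$; the corresponding orbits are m-orbits. *)

theory Defs
  imports "HOL-Analysis.Analysis"
begin

text \<open>Points of the plane are complex numbers; the origin 0 is the reference
  interior point. The curve gamma is parametrised by arc length, counterclockwise,
  as a P-periodic function on the reals (P = perimeter).\<close>

definition unit_dir :: "complex \<Rightarrow> complex \<Rightarrow> complex" where
  "unit_dir a b = (b - a) / complex_of_real (norm (b - a))"

text \<open>The oriented line through a and b, oriented from a to b, encoded canonically
  as (right unit normal n, signed distance p of the origin to the line), i.e. the
  line {x. inner x n = p} with direction i*n. In the notation of the paper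
  n = (cos phi, sin phi).\<close>
definition oriented_line :: "complex \<Rightarrow> complex \<Rightarrow> complex \<times> real" where
  "oriented_line a b = (let n = - \<i> * unit_dir a b in (n, inner a n))"

text \<open>Billiard orbits, described by a lift (s_n) of the arc-length coordinates of the
  consecutive reflection points, normalised by s_n < s_(n+1) < s_n + P. The n-th point
  of the orbit is the oriented chord from gamma(s_n) to gamma(s_(n+1)); consecutive
  chords are related by the reflection law at gamma(s_n) (equal tangential components
  of the incoming and outgoing unit directions).\<close>
definition billiard_orbit ::
  "(real \<Rightarrow> complex) \<Rightarrow> (real \<Rightarrow> complex) \<Rightarrow> real \<Rightarrow> (int \<Rightarrow> real) \<Rightarrow> bool" where
  "billiard_orbit \<gamma> \<gamma>' P s \<longleftrightarrow>
     (\<forall>n. s n < s (n + 1) \<and> s (n + 1) < s n + P) \<and>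
     (\<forall>n. inner (unit_dir (\<gamma> (s (n - 1))) (\<gamma> (s n))) (\<gamma>' (s n))
          = inner (unit_dir (\<gamma> (s n)) (\<gamma> (s (n + 1)))) (\<gamma>' (s n)))"

definition m_config :: "(real \<Rightarrow> real \<Rightarrow> real) \<Rightarrow> (int \<Rightarrow> real) \<Rightarrow> bool" where
  "m_config H q \<longleftrightarrow>
     (\<forall>M N. M < N \<longrightarrow>
        (\<exists>e>0. \<forall>x::int \<Rightarrow> real.
            (\<forall>n. (n \<le> M \<or> N \<le> n) \<longrightarrow> x n = q n) \<and> (\<forall>n. \<bar>x n - q n\<bar> < e) \<longrightarrow>
            (\<Sum>n\<in>{M..<N}. H (x n) (x (n + 1))) \<le> (\<Sum>n\<in>{M..<N}. H (q n) (q (n + 1)))))"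

definition support_fun :: "(real \<Rightarrow> complex) \<Rightarrow> real \<Rightarrow> real" where
  "support_fun \<gamma> \<psi> = (SUP t. inner (\<gamma> t) (cis \<psi>))"

definition L_gen :: "(real \<Rightarrow> complex) \<Rightarrow> real \<Rightarrow> real \<Rightarrow> real" where
  "L_gen \<gamma> s s1 = norm (\<gamma> s1 - \<gamma> s)"

definition S_gen :: "(real \<Rightarrow> complex) \<Rightarrow> real \<Rightarrow> real \<Rightarrow> real" where
  "S_gen \<gamma> \<phi> \<phi>1 = 2 * support_fun \<gamma> ((\<phi> + \<phi>1) / 2) * sin ((\<phi>1 - \<phi>) / 2)"

definition M_L :: "(real \<Rightarrow> complex) \<Rightarrow> (real \<Rightarrow> complex) \<Rightarrow> real \<Rightarrow> (complex \<times> real) set" where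
  "M_L \<gamma> \<gamma>' P =
     {oriented_line (\<gamma> (s n)) (\<gamma> (s (n + 1))) | s n.
        billiard_orbit \<gamma> \<gamma>' P s \<and> m_config (L_gen \<gamma>) s}"

text \<open>Set swept by m-orbits for S in the coordinates (phi, p): phi_n is the lifted
  angle of the right unit normal of the n-th chord, with phi_n < phi_(n+1) < phi_n + 2 pi
  (phi_(n+1) - phi_n = 2 delta_n).\<close>
definition M_S :: "(real \<Rightarrow> complex) \<Rightarrow> (real \<Rightarrow> complex) \<Rightarrow> real \<Rightarrow> (complex \<times> real) set" where
  "M_S \<gamma> \<gamma>' P =
     {oriented_line (\<gamma> (s n)) (\<gamma> (s (n + 1))) | s \<phi> n.
        billiard_orbit \<gamma> \<gamma>' P s \<and>
        (\<forall>k. cis (\<phi> k) = fst (oriented_line (\<gamma> (s k)) (\<gamma> (s (k + 1)))) \<and>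
             \<phi> k < \<phi> (k + 1) \<and> \<phi> (k + 1) < \<phi> k + 2 * pi) \<and>
        m_config (S_gen \<gamma>) \<phi>}"

end

theory Submission
  imports Defs
begin

(* Let F(x, phi) = <gamma(x), i e^(i phi)> (dir_coord), the coordinate of gamma(x) along the
   oriented lines with right normal e^(i phi). By Cauchy-Schwarz, L(a, b) is the maximum over phi
   of F(b, phi) - F(a, phi), attained at the direction of the chord; since
   i (e^(ia) - e^(ib)) = 2 sin((b - a)/2) e^(i(a+b)/2), S(a, b) is the maximum over x of
   F(x, a) - F(x, b), attained where gamma(x) is a support point in the direction e^(i(a+b)/2).
   Along a billiard orbit both maxima are attained at once, the second one by the reflection law
   and strict convexity, so both actions telescope into the same sum of values of F up to
   boundary terms. A small local perturbation of the configuration s induces one of phi (chord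
   directions vary continuously), and conversely (the support point in a direction near that of
   a reflection point is unique and stays near it); the perturbed action is bounded by the
   action of the induced perturbation, so local maximality transfers in both directions. *)

lemma sum_telescope_extend_left:
  fixes a b :: "int \<Rightarrow> 'a::ab_group_add"
  assumes "M \<le> N"
  shows "(\<Sum>n\<in>{M..<N}. a n - b n) = (\<Sum>n\<in>{M - 1..<N}. a n - b (n + 1)) - a (M - 1) + b N"
  using assms
proof (induction N rule: int_ge_induct)
  case base
  have "{M - 1..<M} = {M - 1}" by auto
  then show ?case by simp
next
  case (step i)
  have "{M..<i + 1} = insert i {M..<i}" "{M - 1..<i + 1} = insert i {M - 1..<i}"
    using step.hyps by auto
  then show ?case using step by simp
qed

lemma sum_telescope_extend_right:
  fixes a b :: "int \<Rightarrow> 'a::ab_group_add"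
  assumes "M \<le> N"
  shows "(\<Sum>n\<in>{M..<N}. a n - b (n + 1)) = (\<Sum>n\<in>{M..<N + 1}. a n - b n) + b M - a N"
  using assms
proof (induction N rule: int_ge_induct)
  case base
  have "{M..<M + 1} = {M}" by auto
  then show ?case by simp
next
  case (step i)
  have "{M..<i + 1} = insert i {M..<i}" "{M..<i + 1 + 1} = insert (i + 1) {M..<i + 1}"
    using step.hyps by auto
  then show ?case using step by simp
qed

lemma ex_pos_uniform_finite:
  fixes Q :: "'a \<Rightarrow> real \<Rightarrow> bool"
  assumes "finite A" and "\<forall>n\<in>A. \<exists>d>0. Q n d"
    and mono: "\<And>n d d'. Q n d \<Longrightarrow> 0 < d' \<Longrightarrow> d' \<le> d \<Longrightarrow> Q n d'"
  shows "\<exists>d>0. \<forall>n\<in>A. Q n d"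
  using assms(1,2)
proof (induction A rule: finite_induct)
  case empty
  show ?case using zero_less_one by blast
next
  case (insert m A)
  obtain d1 where "d1 > 0" "\<forall>n\<in>A. Q n d1" using insert by auto
  moreover obtain d2 where "d2 > 0" "Q m d2" using insert.prems by auto
  ultimately show ?case using mono by (intro exI[of _ "min d1 d2"]) auto
qed

lemma sin_half_diff_nonneg_near:
  assumes "0 < b - a" "b - a < 2 * pi"
    and "2 * \<bar>a' - a\<bar> \<le> min (b - a) (2 * pi - (b - a))"
    and "2 * \<bar>b' - b\<bar> \<le> min (b - a) (2 * pi - (b - a))"
  shows "sin ((b' - a') / 2) \<ge> 0"
  using assms by (intro sin_ge_zero) (auto simp: abs_real_def split: if_splits)

lemma i_mult_cis_diff:
  "\<i> * (cis a - cis b) = complex_of_real (2 * sin ((b - a) / 2)) * cis ((a + b) / 2)"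
proof -
  define p d where "p = (a + b) / 2" and "d = (b - a) / 2"
  have "cis a = cis p * cis (- d)" "cis b = cis p * cis d"
    unfolding p_def d_def cis_mult by (simp_all add: field_simps)
  then have "\<i> * (cis a - cis b) = \<i> * cis p * (cis (- d) - cis d)"
    by (simp add: algebra_simps)
  also have "cis (- d) - cis d = - 2 * \<i> * complex_of_real (sin d)"
    by (simp add: complex_eq_iff)
  finally show ?thesis unfolding p_def d_def by (simp add: algebra_simps)
qed

lemma cis_add_Arg_divide:
  assumes "norm z = 1" "norm w = 1"
  shows "cis (\<phi> + Arg (z / w)) = cis \<phi> * z / w"
proof -
  have "z / w \<noteq> 0" "norm (z / w) = 1" using assms by (auto simp: norm_divide)
  then show ?thesis by (simp add: cis_mult[symmetric] cis_Arg sgn_div_norm)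
qed

lemma inner_divide_of_real: "inner (z / complex_of_real r) w = inner z w / r"
  by (simp add: inner_complex_def add_divide_distrib)

lemma inner_unit_dir: "inner (b - a) (unit_dir a b) = norm (b - a)"
proof (cases "a = b")
  case False
  have "unit_dir a b = scaleR (inverse (norm (b - a))) (b - a)"
    by (simp add: unit_dir_def scaleR_conv_of_real divide_inverse mult.commute)
  then show ?thesis using False by (simp add: power2_norm_eq_inner[symmetric] power2_eq_square)
qed (simp add: unit_dir_def)

lemma norm_unit_dir: "a \<noteq> b \<Longrightarrow> norm (unit_dir a b) = 1"
  by (simp add: unit_dir_def norm_divide)

lemma fst_oriented_line: "fst (oriented_line a b) = - \<i> * unit_dir a b"
  by (simp add: oriented_line_def Let_def)

lemma inner_expand_orthonormal:
  assumes "norm T = 1"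
  shows "inner v w = inner v T * inner w T + inner v (- \<i> * T) * inner w (- \<i> * T)"
proof -
  have "(Re T)\<^sup>2 + (Im T)\<^sup>2 = 1" using assms by (simp add: cmod_def)
  moreover have "inner v T * inner w T + inner v (- \<i> * T) * inner w (- \<i> * T)
      = (Re v * Re w + Im v * Im w) * ((Re T)\<^sup>2 + (Im T)\<^sup>2)"
    by (simp add: inner_complex_def power2_eq_square algebra_simps)
  ultimately show ?thesis by (simp add: inner_complex_def)
qed

lemma ex_increasing_angle_lift:
  fixes c :: "int \<Rightarrow> complex"
  assumes norm_c: "\<And>k. norm (c k) = 1" and c_neq: "\<And>k. c (k + 1) \<noteq> c k"
  shows "\<exists>\<phi>. \<forall>k. cis (\<phi> k) = c k \<and> \<phi> k < \<phi> (k + 1) \<and> \<phi> (k + 1) < \<phi> k + 2 * pi"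
proof -
  have cis_Arg2pi: "cis (Arg2pi z) = z" if "norm z = 1" for z
    using Arg2pi[of z] that unfolding is_Arg_def by (simp add: cis_conv_exp)
  have c_nz: "c k \<noteq> 0" for k using norm_c[of k] by auto
  define D where "D k = Arg2pi (c (k + 1) / c k)" for k
  have cis_D: "cis (D k) = c (k + 1) / c k" for k
    unfolding D_def by (rule cis_Arg2pi) (simp add: norm_divide norm_c)
  have D_range: "0 < D k" "D k < 2 * pi" for k
  proof -
    have "D k \<noteq> 0" using cis_D[of k] c_nz[of k] c_neq[of k] by (auto simp: divide_eq_1_iff)
    then show "0 < D k" "D k < 2 * pi" using Arg2pi unfolding D_def by (auto simp: less_le)
  qed
  define \<phi> where
    "\<phi> k = Arg2pi (c 0) + (if 0 \<le> k then sum D {0..<k} else - sum D {k..<0})" for k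
  have \<phi>_step: "\<phi> (k + 1) = \<phi> k + D k" for k
  proof (cases "0 \<le> k")
    case True
    then have "{0..<k + 1} = insert k {0..<k}" by auto
    then show ?thesis using True unfolding \<phi>_def by simp
  next
    case False
    then have "{k..<0} = insert k {k + 1..<0}" by auto
    then show ?thesis using False unfolding \<phi>_def by auto
  qed
  have "cis (\<phi> k) = c k" for k
  proof (induction k rule: int_induct[where k = 0])
    case base
    show ?case unfolding \<phi>_def by (simp add: cis_Arg2pi norm_c)
  next
    case (step1 i)
    then show ?case using cis_D[of i] c_nz[of i] by (simp add: \<phi>_step cis_mult[symmetric])
  next
    case (step2 i)
    then have "c i = cis (\<phi> (i - 1)) * (c i / c (i - 1))"
      using \<phi>_step[of "i - 1"] cis_D[of "i - 1"] by (simp add: cis_mult[symmetric])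
    then show ?case using c_nz[of "i - 1"] c_nz[of i] by (auto simp: field_simps)
  qed
  then show ?thesis using \<phi>_step D_range by (intro exI[of _ \<phi>]) auto
qed

definition dir_coord :: "(real \<Rightarrow> complex) \<Rightarrow> real \<Rightarrow> real \<Rightarrow> real" where
  "dir_coord \<gamma> x \<phi> = inner (\<gamma> x) (\<i> * cis \<phi>)"

definition normal_lift :: "(real \<Rightarrow> complex) \<Rightarrow> (int \<Rightarrow> real) \<Rightarrow> (int \<Rightarrow> real) \<Rightarrow> bool" where
  "normal_lift \<gamma> s \<phi> \<longleftrightarrow>
     (\<forall>k. cis (\<phi> k) = fst (oriented_line (\<gamma> (s k)) (\<gamma> (s (k + 1)))) \<and>
          \<phi> k < \<phi> (k + 1) \<and> \<phi> (k + 1) < \<phi> k + 2 * pi)"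

lemma normal_lift_unit_dir:
  "normal_lift \<gamma> s \<phi> \<Longrightarrow> \<i> * cis (\<phi> n) = unit_dir (\<gamma> (s n)) (\<gamma> (s (n + 1)))"
  unfolding normal_lift_def fst_oriented_line by simp

lemma normal_lift_rotate:
  assumes lift: "normal_lift \<gamma> s \<phi>" and "a \<noteq> b"
  shows "\<i> * cis (\<phi> n + Arg (unit_dir a b / unit_dir (\<gamma> (s n)) (\<gamma> (s (n + 1))))) = unit_dir a b"
proof -
  let ?u = "unit_dir (\<gamma> (s n)) (\<gamma> (s (n + 1)))"
  have u: "\<i> * cis (\<phi> n) = ?u" by (rule normal_lift_unit_dir[OF lift])
  then have "norm ?u = 1" unfolding u[symmetric] by (simp add: norm_mult)
  then have "\<i> * cis (\<phi> n + Arg (unit_dir a b / ?u)) = (\<i> * cis (\<phi> n)) * unit_dir a b / ?u"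
    using cis_add_Arg_divide[OF norm_unit_dir[OF \<open>a \<noteq> b\<close>]] by (simp add: mult.assoc)
  also have "\<dots> = unit_dir a b" using u \<open>norm ?u = 1\<close> by auto
  finally show ?thesis .
qed

lemma dir_coord_diff_le_L_gen: "dir_coord \<gamma> b \<phi> - dir_coord \<gamma> a \<phi> \<le> L_gen \<gamma> a b"
proof -
  have "dir_coord \<gamma> b \<phi> - dir_coord \<gamma> a \<phi> = inner (\<gamma> b - \<gamma> a) (\<i> * cis \<phi>)"
    unfolding dir_coord_def by (simp add: inner_diff_left)
  also have "\<dots> \<le> norm (\<gamma> b - \<gamma> a) * norm (\<i> * cis \<phi>)" by (rule norm_cauchy_schwarz)
  finally show ?thesis by (simp add: L_gen_def norm_mult)
qed

lemma dir_coord_diff_eq_L_gen: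
  assumes "\<gamma> a \<noteq> \<gamma> b \<Longrightarrow> \<i> * cis \<phi> = unit_dir (\<gamma> a) (\<gamma> b)"
  shows "dir_coord \<gamma> b \<phi> - dir_coord \<gamma> a \<phi> = L_gen \<gamma> a b"
proof (cases "\<gamma> a = \<gamma> b")
  case False
  then have "dir_coord \<gamma> b \<phi> - dir_coord \<gamma> a \<phi> = inner (\<gamma> b - \<gamma> a) (unit_dir (\<gamma> a) (\<gamma> b))"
    using assms by (simp add: dir_coord_def inner_diff_left)
  then show ?thesis by (simp add: inner_unit_dir L_gen_def)
qed (simp add: dir_coord_def L_gen_def)

lemma dir_coord_angle_diff:
  "dir_coord \<gamma> x a - dir_coord \<gamma> x b = 2 * sin ((b - a) / 2) * inner (\<gamma> x) (cis ((a + b) / 2))"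
proof -
  have "dir_coord \<gamma> x a - dir_coord \<gamma> x b = inner (\<gamma> x) (\<i> * (cis a - cis b))"
    unfolding dir_coord_def by (simp add: inner_diff_right algebra_simps)
  then show ?thesis unfolding i_mult_cis_diff scaleR_conv_of_real[symmetric] by simp
qed

lemma support_fun_eq_max:
  assumes "\<forall>u. inner (\<gamma> u) (cis \<psi>) \<le> inner (\<gamma> x) (cis \<psi>)"
  shows "support_fun \<gamma> \<psi> = inner (\<gamma> x) (cis \<psi>)"
  unfolding support_fun_def using assms by (intro cSup_eq_maximum) auto

lemma dir_coord_angle_diff_le_S_gen:
  assumes "bdd_above (range (\<lambda>t. inner (\<gamma> t) (cis ((a + b) / 2))))"
    and "sin ((b - a) / 2) \<ge> 0"
  shows "dir_coord \<gamma> x a - dir_coord \<gamma> x b \<le> S_gen \<gamma> a b"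
proof -
  have "inner (\<gamma> x) (cis ((a + b) / 2)) \<le> support_fun \<gamma> ((a + b) / 2)"
    unfolding support_fun_def using assms(1) by (rule cSUP_upper[OF UNIV_I])
  then have "2 * sin ((b - a) / 2) * inner (\<gamma> x) (cis ((a + b) / 2))
      \<le> 2 * sin ((b - a) / 2) * support_fun \<gamma> ((a + b) / 2)"
    using assms(2) by (simp add: mult_left_mono)
  then show ?thesis unfolding dir_coord_angle_diff S_gen_def by (simp add: mult_ac)
qed

lemma dir_coord_angle_diff_eq_S_gen:
  assumes "\<forall>u. inner (\<gamma> u) (cis ((a + b) / 2)) \<le> inner (\<gamma> x) (cis ((a + b) / 2))"
  shows "dir_coord \<gamma> x a - dir_coord \<gamma> x b = S_gen \<gamma> a b"
  unfolding dir_coord_angle_diff S_gen_def support_fun_eq_max[OF assms] by simp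

lemma sum_L_gen_le_sum_S_gen:
  fixes x y :: "int \<Rightarrow> real" and M N :: int
  assumes "M \<le> N"
    and bdd: "\<And>w. bdd_above (range (\<lambda>t. inner (\<gamma> t) w))"
    and chord: "\<And>n. \<gamma> (x n) \<noteq> \<gamma> (x (n + 1)) \<Longrightarrow> \<i> * cis (y n) = unit_dir (\<gamma> (x n)) (\<gamma> (x (n + 1)))"
    and sin_nonneg: "\<And>n. sin ((y (n + 1) - y n) / 2) \<ge> 0"
  shows "(\<Sum>n\<in>{M..<N}. L_gen \<gamma> (x n) (x (n + 1)))
    \<le> (\<Sum>n\<in>{M - 1..<N}. S_gen \<gamma> (y n) (y (n + 1)))
       - dir_coord \<gamma> (x M) (y (M - 1)) + dir_coord \<gamma> (x N) (y N)"
proof -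
  have "(\<Sum>n\<in>{M..<N}. L_gen \<gamma> (x n) (x (n + 1)))
      = (\<Sum>n\<in>{M..<N}. dir_coord \<gamma> (x (n + 1)) (y n) - dir_coord \<gamma> (x n) (y n))"
    using chord by (simp add: dir_coord_diff_eq_L_gen)
  also have "\<dots> = (\<Sum>n\<in>{M - 1..<N}. dir_coord \<gamma> (x (n + 1)) (y n) - dir_coord \<gamma> (x (n + 1)) (y (n + 1)))
       - dir_coord \<gamma> (x M) (y (M - 1)) + dir_coord \<gamma> (x N) (y N)"
    using sum_telescope_extend_left[OF \<open>M \<le> N\<close>, of "\<lambda>n. dir_coord \<gamma> (x (n + 1)) (y n)" "\<lambda>n. dir_coord \<gamma> (x n) (y n)"] by simp
  also have "\<dots> \<le> (\<Sum>n\<in>{M - 1..<N}. S_gen \<gamma> (y n) (y (n + 1)))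
       - dir_coord \<gamma> (x M) (y (M - 1)) + dir_coord \<gamma> (x N) (y N)"
    using dir_coord_angle_diff_le_S_gen[OF bdd sin_nonneg] by (simp add: sum_mono)
  finally show ?thesis .
qed

lemma sum_L_gen_eq_sum_S_gen:
  fixes x y :: "int \<Rightarrow> real" and M N :: int
  assumes "M \<le> N"
    and chord: "\<And>n. \<gamma> (x n) \<noteq> \<gamma> (x (n + 1)) \<Longrightarrow> \<i> * cis (y n) = unit_dir (\<gamma> (x n)) (\<gamma> (x (n + 1)))"
    and support: "\<And>n u. inner (\<gamma> u) (cis ((y n + y (n + 1)) / 2))
                         \<le> inner (\<gamma> (x (n + 1))) (cis ((y n + y (n + 1)) / 2))"
  shows "(\<Sum>n\<in>{M..<N}. L_gen \<gamma> (x n) (x (n + 1)))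
    = (\<Sum>n\<in>{M - 1..<N}. S_gen \<gamma> (y n) (y (n + 1)))
       - dir_coord \<gamma> (x M) (y (M - 1)) + dir_coord \<gamma> (x N) (y N)"
proof -
  have "(\<Sum>n\<in>{M..<N}. L_gen \<gamma> (x n) (x (n + 1)))
      = (\<Sum>n\<in>{M..<N}. dir_coord \<gamma> (x (n + 1)) (y n) - dir_coord \<gamma> (x n) (y n))"
    using chord by (simp add: dir_coord_diff_eq_L_gen)
  also have "\<dots> = (\<Sum>n\<in>{M - 1..<N}. dir_coord \<gamma> (x (n + 1)) (y n) - dir_coord \<gamma> (x (n + 1)) (y (n + 1)))
       - dir_coord \<gamma> (x M) (y (M - 1)) + dir_coord \<gamma> (x N) (y N)"
    using sum_telescope_extend_left[OF \<open>M \<le> N\<close>, of "\<lambda>n. dir_coord \<gamma> (x (n + 1)) (y n)" "\<lambda>n. dir_coord \<gamma> (x n) (y n)"] by simp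
  also have "\<dots> = (\<Sum>n\<in>{M - 1..<N}. S_gen \<gamma> (y n) (y (n + 1)))
       - dir_coord \<gamma> (x M) (y (M - 1)) + dir_coord \<gamma> (x N) (y N)"
    using support by (simp add: dir_coord_angle_diff_eq_S_gen)
  finally show ?thesis .
qed

lemma sum_S_gen_le_sum_L_gen:
  fixes x y :: "int \<Rightarrow> real" and M N :: int
  assumes "M \<le> N"
    and support: "\<And>n u. n \<in> {M..<N} \<Longrightarrow> inner (\<gamma> u) (cis ((y n + y (n + 1)) / 2))
                         \<le> inner (\<gamma> (x (n + 1))) (cis ((y n + y (n + 1)) / 2))"
  shows "(\<Sum>n\<in>{M..<N}. S_gen \<gamma> (y n) (y (n + 1)))
    \<le> (\<Sum>n\<in>{M..<N + 1}. L_gen \<gamma> (x n) (x (n + 1)))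
       + dir_coord \<gamma> (x M) (y M) - dir_coord \<gamma> (x (N + 1)) (y N)"
proof -
  have "(\<Sum>n\<in>{M..<N}. S_gen \<gamma> (y n) (y (n + 1)))
      = (\<Sum>n\<in>{M..<N}. dir_coord \<gamma> (x (n + 1)) (y n) - dir_coord \<gamma> (x (n + 1)) (y (n + 1)))"
    using support by (simp add: dir_coord_angle_diff_eq_S_gen)
  also have "\<dots> = (\<Sum>n\<in>{M..<N + 1}. dir_coord \<gamma> (x (n + 1)) (y n) - dir_coord \<gamma> (x n) (y n))
       + dir_coord \<gamma> (x M) (y M) - dir_coord \<gamma> (x (N + 1)) (y N)"
    using sum_telescope_extend_right[OF \<open>M \<le> N\<close>, of "\<lambda>n. dir_coord \<gamma> (x (n + 1)) (y n)" "\<lambda>n. dir_coord \<gamma> (x n) (y n)"] by simp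
  also have "\<dots> \<le> (\<Sum>n\<in>{M..<N + 1}. L_gen \<gamma> (x n) (x (n + 1)))
       + dir_coord \<gamma> (x M) (y M) - dir_coord \<gamma> (x (N + 1)) (y N)"
    using dir_coord_diff_le_L_gen by (simp add: sum_mono)
  finally show ?thesis .
qed

lemma sum_S_gen_eq_sum_L_gen:
  fixes x y :: "int \<Rightarrow> real" and M N :: int
  assumes "M \<le> N"
    and chord: "\<And>n. \<gamma> (x n) \<noteq> \<gamma> (x (n + 1)) \<Longrightarrow> \<i> * cis (y n) = unit_dir (\<gamma> (x n)) (\<gamma> (x (n + 1)))"
    and support: "\<And>n u. inner (\<gamma> u) (cis ((y n + y (n + 1)) / 2))
                         \<le> inner (\<gamma> (x (n + 1))) (cis ((y n + y (n + 1)) / 2))"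
  shows "(\<Sum>n\<in>{M..<N}. S_gen \<gamma> (y n) (y (n + 1)))
    = (\<Sum>n\<in>{M..<N + 1}. L_gen \<gamma> (x n) (x (n + 1)))
       + dir_coord \<gamma> (x M) (y M) - dir_coord \<gamma> (x (N + 1)) (y N)"
proof -
  have "(\<Sum>n\<in>{M..<N}. S_gen \<gamma> (y n) (y (n + 1)))
      = (\<Sum>n\<in>{M..<N}. dir_coord \<gamma> (x (n + 1)) (y n) - dir_coord \<gamma> (x (n + 1)) (y (n + 1)))"
    using support by (simp add: dir_coord_angle_diff_eq_S_gen)
  also have "\<dots> = (\<Sum>n\<in>{M..<N + 1}. dir_coord \<gamma> (x (n + 1)) (y n) - dir_coord \<gamma> (x n) (y n))
       + dir_coord \<gamma> (x M) (y M) - dir_coord \<gamma> (x (N + 1)) (y N)"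
    using sum_telescope_extend_right[OF \<open>M \<le> N\<close>, of "\<lambda>n. dir_coord \<gamma> (x (n + 1)) (y n)" "\<lambda>n. dir_coord \<gamma> (x n) (y n)"] by simp
  also have "\<dots> = (\<Sum>n\<in>{M..<N + 1}. L_gen \<gamma> (x n) (x (n + 1)))
       + dir_coord \<gamma> (x M) (y M) - dir_coord \<gamma> (x (N + 1)) (y N)"
    using chord by (simp add: dir_coord_diff_eq_L_gen)
  finally show ?thesis .
qed

locale convex_billiard_table =
  fixes \<gamma> \<gamma>' :: "real \<Rightarrow> complex" and P :: real
  assumes period_pos: "P > 0"
    and continuous_curve: "continuous_on UNIV \<gamma>"
    and unit_tangent: "\<And>t. norm (\<gamma>' t) = 1"
    and periodic: "\<And>t. \<gamma> (t + P) = \<gamma> t"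
    and inj_period: "inj_on \<gamma> {0..<P}"
    and strictly_convex: "\<And>s t. \<gamma> t \<noteq> \<gamma> s \<Longrightarrow> Im (cnj (\<gamma>' s) * (\<gamma> t - \<gamma> s)) > 0"
begin

lemma periodic_int: "\<gamma> (t + of_int k * P) = \<gamma> t"
proof (induction k rule: int_induct[where k = 0])
  case (step1 i)
  have "\<gamma> (t + of_int (i + 1) * P) = \<gamma> ((t + of_int i * P) + P)" by (simp add: algebra_simps)
  then show ?case using periodic step1 by simp
next
  case (step2 i)
  have "\<gamma> (t + of_int i * P) = \<gamma> ((t + of_int (i - 1) * P) + P)" by (simp add: algebra_simps)
  then show ?case using periodic step2 by simp
qed simp

lemma ex_shift_into_period: "\<exists>k::int. a \<le> t + of_int k * P \<and> t + of_int k * P < a + P"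
proof
  let ?k = "\<lfloor>(t - a) / P\<rfloor>"
  have "of_int ?k * P \<le> t - a" "t - a < (of_int ?k + 1) * P"
    using floor_divide_lower[OF period_pos] floor_divide_upper[OF period_pos] .
  then show "a \<le> t + of_int (- ?k) * P \<and> t + of_int (- ?k) * P < a + P"
    by (simp add: algebra_simps)
qed

lemma image_period_eq_range: "\<gamma> ` {a..a + P} = range \<gamma>"
proof -
  have "\<gamma> t \<in> \<gamma> ` {a..a + P}" for t
  proof -
    obtain k :: int where k: "a \<le> t + of_int k * P" "t + of_int k * P < a + P"
      using ex_shift_into_period by blast
    then have "t + of_int k * P \<in> {a..a + P}" by simp
    then show ?thesis using periodic_int[of t k] by (intro image_eqI[of _ _ "t + of_int k * P"]) auto
  qed
  then show ?thesis by auto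
qed

lemma curve_neq_within_period:
  assumes "a < b" "b < a + P"
  shows "\<gamma> a \<noteq> \<gamma> b"
proof
  assume eq: "\<gamma> a = \<gamma> b"
  obtain k :: int where k: "a + of_int k * P \<in> {0..<P}"
    using ex_shift_into_period[of 0 a] by auto
  obtain l :: int where l: "b + of_int l * P \<in> {0..<P}"
    using ex_shift_into_period[of 0 b] by auto
  have "\<gamma> (a + of_int k * P) = \<gamma> (b + of_int l * P)" using eq by (simp add: periodic_int)
  then have "a + of_int k * P = b + of_int l * P" using inj_onD[OF inj_period _ k l] by blast
  then have "b - a = of_int (k - l) * P" by (simp add: algebra_simps)
  then have "0 < of_int (k - l) * P" "of_int (k - l) * P < 1 * P" using assms by linarith+
  then have "0 < k - l" "k - l < 1"
    using period_pos by (simp_all add: zero_less_mult_iff mult_less_cancel_right)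
  then show False by linarith
qed

lemma support_point_exists: "\<exists>t\<in>{a..a + P}. \<forall>u. inner (\<gamma> u) w \<le> inner (\<gamma> t) w"
proof -
  have "continuous_on {a..a + P} (\<lambda>t. inner (\<gamma> t) w)"
    by (rule continuous_on_inner[OF continuous_on_subset[OF continuous_curve] continuous_on_const]) simp
  moreover have "{a..a + P} \<noteq> {}" using period_pos by simp
  ultimately obtain t where t: "t \<in> {a..a + P}"
    and max: "\<forall>u\<in>{a..a + P}. inner (\<gamma> u) w \<le> inner (\<gamma> t) w"
    using continuous_attains_sup[OF compact_Icc] by blast
  have "inner z w \<le> inner (\<gamma> t) w" if "z \<in> range \<gamma>" for z
    using that max unfolding image_period_eq_range[of a, symmetric] by blast
  then show ?thesis using t by blast
qed

lemma bdd_above_inner: "bdd_above (range (\<lambda>t. inner (\<gamma> t) w))"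
  using support_point_exists[of 0 w] by (auto simp: bdd_above_def)

lemma bounded_range: "bounded (range \<gamma>)"
proof -
  have "compact (\<gamma> ` {0..0 + P})"
    by (intro compact_continuous_image continuous_on_subset[OF continuous_curve]) auto
  then show ?thesis unfolding image_period_eq_range by (rule compact_imp_bounded)
qed

lemma inner_outer_normal_neg: "\<gamma> t \<noteq> \<gamma> s \<Longrightarrow> inner (\<gamma> t - \<gamma> s) (- \<i> * \<gamma>' s) < 0"
  using strictly_convex[of t s] by (simp add: inner_complex_def algebra_simps)

lemma unit_dir_outer_normal:
  assumes "\<gamma> a \<noteq> \<gamma> b"
  shows "inner (unit_dir (\<gamma> a) (\<gamma> b)) (- \<i> * \<gamma>' a) < 0"
    and "inner (unit_dir (\<gamma> a) (\<gamma> b)) (- \<i> * \<gamma>' b) > 0"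
proof -
  have "norm (\<gamma> b - \<gamma> a) > 0" using assms by simp
  moreover have "inner (\<gamma> b - \<gamma> a) (- \<i> * \<gamma>' a) < 0" "inner (\<gamma> a - \<gamma> b) (- \<i> * \<gamma>' b) < 0"
    using assms inner_outer_normal_neg by auto
  moreover have "inner (\<gamma> a - \<gamma> b) v = - inner (\<gamma> b - \<gamma> a) v" for v
    by (simp add: inner_diff_left)
  ultimately show "inner (unit_dir (\<gamma> a) (\<gamma> b)) (- \<i> * \<gamma>' a) < 0"
    and "inner (unit_dir (\<gamma> a) (\<gamma> b)) (- \<i> * \<gamma>' b) > 0"
    by (simp_all add: unit_dir_def inner_divide_of_real divide_neg_pos)
qed

lemma billiard_orbit_distinct: "billiard_orbit \<gamma> \<gamma>' P s \<Longrightarrow> \<gamma> (s n) \<noteq> \<gamma> (s (n + 1))"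
  unfolding billiard_orbit_def using curve_neq_within_period by blast

lemma billiard_orbit_reflection:
  "billiard_orbit \<gamma> \<gamma>' P s \<Longrightarrow>
    inner (unit_dir (\<gamma> (s n)) (\<gamma> (s (n + 1)))) (\<gamma>' (s (n + 1)))
    = inner (unit_dir (\<gamma> (s (n + 1))) (\<gamma> (s (n + 2)))) (\<gamma>' (s (n + 1)))"
proof -
  assume "billiard_orbit \<gamma> \<gamma>' P s"
  then have "inner (unit_dir (\<gamma> (s (n + 1 - 1))) (\<gamma> (s (n + 1)))) (\<gamma>' (s (n + 1)))
    = inner (unit_dir (\<gamma> (s (n + 1))) (\<gamma> (s (n + 1 + 1)))) (\<gamma>' (s (n + 1)))"
    unfolding billiard_orbit_def by blast
  then show ?thesis by (simp add: add.assoc)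
qed

lemma billiard_orbit_chords_neq:
  assumes "billiard_orbit \<gamma> \<gamma>' P s"
  shows "unit_dir (\<gamma> (s (n + 1))) (\<gamma> (s (n + 2))) \<noteq> unit_dir (\<gamma> (s n)) (\<gamma> (s (n + 1)))"
  using unit_dir_outer_normal(2)[OF billiard_orbit_distinct[OF assms, of n]]
    unit_dir_outer_normal(1)[OF billiard_orbit_distinct[OF assms, of "n + 1"]]
  by (auto simp: add.assoc)

lemma normal_lift_exists:
  assumes "billiard_orbit \<gamma> \<gamma>' P s"
  shows "\<exists>\<phi>. normal_lift \<gamma> s \<phi>"
  unfolding normal_lift_def
proof (rule ex_increasing_angle_lift)
  show "norm (fst (oriented_line (\<gamma> (s k)) (\<gamma> (s (k + 1))))) = 1" for k
    using norm_unit_dir[OF billiard_orbit_distinct[OF assms]] by (simp add: fst_oriented_line norm_mult)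
  show "fst (oriented_line (\<gamma> (s (k + 1))) (\<gamma> (s (k + 1 + 1))))
      \<noteq> fst (oriented_line (\<gamma> (s k)) (\<gamma> (s (k + 1))))" for k
    using billiard_orbit_chords_neq[OF assms, of k] by (simp add: fst_oriented_line add.assoc)
qed

lemma reflection_point_strict_support:
  assumes orb: "billiard_orbit \<gamma> \<gamma>' P s" and lift: "normal_lift \<gamma> s \<phi>"
    and "\<gamma> u \<noteq> \<gamma> (s (n + 1))"
  shows "inner (\<gamma> u) (cis ((\<phi> n + \<phi> (n + 1)) / 2))
    < inner (\<gamma> (s (n + 1))) (cis ((\<phi> n + \<phi> (n + 1)) / 2))"
proof -
  define X T where "X = \<gamma> (s (n + 1))" and "T = \<gamma>' (s (n + 1))"
  define w where "w = unit_dir (\<gamma> (s n)) X - unit_dir X (\<gamma> (s (n + 2)))"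
  have w_eq: "w = complex_of_real (2 * sin ((\<phi> (n + 1) - \<phi> n) / 2)) * cis ((\<phi> n + \<phi> (n + 1)) / 2)"
    using normal_lift_unit_dir[OF lift, of n] normal_lift_unit_dir[OF lift, of "n + 1"]
      i_mult_cis_diff[of "\<phi> n" "\<phi> (n + 1)"]
    by (simp add: w_def X_def add.assoc right_diff_distrib)
  have "0 < (\<phi> (n + 1) - \<phi> n) / 2" "(\<phi> (n + 1) - \<phi> n) / 2 < pi"
    using lift unfolding normal_lift_def by (auto simp: field_simps)
  then have sin_pos: "sin ((\<phi> (n + 1) - \<phi> n) / 2) > 0" by (rule sin_gt_zero)
  have "inner w T = 0"
    using billiard_orbit_reflection[OF orb] by (simp add: w_def X_def T_def inner_diff_left)
  moreover have "inner w (- \<i> * T) > 0"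
    using unit_dir_outer_normal(2)[OF billiard_orbit_distinct[OF orb, of n]]
      unit_dir_outer_normal(1)[OF billiard_orbit_distinct[OF orb, of "n + 1"]]
    by (simp add: w_def X_def T_def inner_diff_left add.assoc)
  moreover have "inner (\<gamma> u - X) (- \<i> * T) < 0"
    using inner_outer_normal_neg assms(3) by (simp add: X_def T_def)
  ultimately have "inner (\<gamma> u - X) w < 0"
    using inner_expand_orthonormal[OF unit_tangent, of "\<gamma> u - X" w "s (n + 1)"]
    by (simp add: T_def mult_pos_neg)
  then have "inner (\<gamma> u - X) (cis ((\<phi> n + \<phi> (n + 1)) / 2)) < 0"
    using sin_pos unfolding w_eq scaleR_conv_of_real[symmetric]
    by (simp add: mult_less_0_iff)
  then show ?thesis by (simp add: X_def inner_diff_left)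
qed

lemma reflection_point_support:
  assumes "billiard_orbit \<gamma> \<gamma>' P s" and "normal_lift \<gamma> s \<phi>"
  shows "inner (\<gamma> u) (cis ((\<phi> n + \<phi> (n + 1)) / 2))
    \<le> inner (\<gamma> (s (n + 1))) (cis ((\<phi> n + \<phi> (n + 1)) / 2))"
  using reflection_point_strict_support[OF assms, of u n] by (cases "\<gamma> u = \<gamma> (s (n + 1))") auto

lemma Arg_unit_dir_ratio_small:
  assumes ne: "\<gamma> a0 \<noteq> \<gamma> b0" and "\<epsilon> > 0"
  shows "\<exists>d>0. \<forall>a b. \<bar>a - a0\<bar> < d \<longrightarrow> \<bar>b - b0\<bar> < d \<longrightarrow>
           \<bar>Arg (unit_dir (\<gamma> a) (\<gamma> b) / unit_dir (\<gamma> a0) (\<gamma> b0))\<bar> < \<epsilon>"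
proof -
  define g where "g z = unit_dir (\<gamma> (fst z)) (\<gamma> (snd z)) / unit_dir (\<gamma> a0) (\<gamma> b0)" for z
  have u0: "unit_dir (\<gamma> a0) (\<gamma> b0) \<noteq> 0" using norm_unit_dir[OF ne] by auto
  have "isCont \<gamma> t" for t
    using continuous_curve continuous_on_eq_continuous_at[OF open_UNIV] by blast
  then have "isCont (\<lambda>z. \<gamma> (fst z)) (a0, b0)" "isCont (\<lambda>z. \<gamma> (snd z)) (a0, b0)"
    by (auto intro: isCont_o2[OF isCont_fst[OF continuous_ident]] isCont_o2[OF isCont_snd[OF continuous_ident]])
  then have "isCont g (a0, b0)"
    using ne u0 unfolding g_def unit_dir_def by (intro continuous_intros) auto
  moreover have "isCont Arg (g (a0, b0))"
    using u0 by (intro continuous_at_Arg) (simp add: g_def)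
  ultimately have "isCont (Arg \<circ> g) (a0, b0)" by (rule continuous_at_compose)
  moreover have "(Arg \<circ> g) (a0, b0) = 0" using u0 by (simp add: g_def)
  ultimately obtain d where "d > 0" and d: "\<And>z. dist z (a0, b0) < d \<Longrightarrow> \<bar>Arg (g z)\<bar> < \<epsilon>"
    using \<open>\<epsilon> > 0\<close> unfolding continuous_at_eps_delta by (auto simp: dist_real_def)
  have "\<bar>Arg (g (a, b))\<bar> < \<epsilon>" if "\<bar>a - a0\<bar> < d / 2" "\<bar>b - b0\<bar> < d / 2" for a b
  proof (rule d)
    have "dist (a, b) (a0, b0) \<le> \<bar>a - a0\<bar> + \<bar>b - b0\<bar>"
      unfolding dist_Pair_Pair dist_real_def using sqrt_sum_squares_le_sum_abs by simp
    then show "dist (a, b) (a0, b0) < d" using that by simp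
  qed
  then show ?thesis using \<open>d > 0\<close> by (intro exI[of _ "d / 2"]) (auto simp: g_def)
qed

lemma support_gap:
  assumes strict: "\<And>u. \<gamma> u \<noteq> \<gamma> s0 \<Longrightarrow> inner (\<gamma> u) w < inner (\<gamma> s0) w" and "\<epsilon> > 0"
  shows "\<exists>m>0. \<forall>t. \<epsilon> \<le> \<bar>t - s0\<bar> \<longrightarrow> \<bar>t - s0\<bar> \<le> P / 2 \<longrightarrow> inner (\<gamma> t) w + m \<le> inner (\<gamma> s0) w"
proof -
  define K where "K = {s0 - P / 2..s0 - \<epsilon>} \<union> {s0 + \<epsilon>..s0 + P / 2}"
  have K_iff: "t \<in> K \<longleftrightarrow> \<epsilon> \<le> \<bar>t - s0\<bar> \<and> \<bar>t - s0\<bar> \<le> P / 2" for t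
    unfolding K_def atLeastAtMost_iff Un_iff using \<open>\<epsilon> > 0\<close> by arith
  define g where "g t = inner (\<gamma> s0 - \<gamma> t) w" for t
  show ?thesis
  proof (cases "K = {}")
    case True
    then show ?thesis using K_iff by (intro exI[of _ 1]) auto
  next
    case False
    have cont: "continuous_on K g" unfolding g_def
      by (intro continuous_on_inner continuous_on_diff continuous_on_const
          continuous_on_subset[OF continuous_curve]) auto
    have "compact K" unfolding K_def by auto
    then obtain t0 where "t0 \<in> K" and min: "\<forall>t\<in>K. g t0 \<le> g t"
      using continuous_attains_inf[OF _ False cont] by blast
    then have "0 < \<bar>t0 - s0\<bar>" "\<bar>t0 - s0\<bar> < P" using K_iff \<open>\<epsilon> > 0\<close> period_pos by force+
    then have "\<gamma> t0 \<noteq> \<gamma> s0"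
      using curve_neq_within_period[of t0 s0] curve_neq_within_period[of s0 t0] by (cases "t0 < s0") auto
    then have "g t0 > 0" using strict unfolding g_def by (simp add: inner_diff_left)
    then show ?thesis
      using min K_iff by (intro exI[of _ "g t0"]) (auto simp: g_def inner_diff_left)
  qed
qed

lemma support_point_near:
  assumes strict: "\<And>u. \<gamma> u \<noteq> \<gamma> s0 \<Longrightarrow> inner (\<gamma> u) (cis p0) < inner (\<gamma> s0) (cis p0)"
    and "\<epsilon> > 0"
  shows "\<exists>d>0. \<forall>p t. \<bar>p - p0\<bar> < d \<longrightarrow> \<bar>t - s0\<bar> \<le> P / 2 \<longrightarrow>
           (\<forall>u. inner (\<gamma> u) (cis p) \<le> inner (\<gamma> t) (cis p)) \<longrightarrow> \<bar>t - s0\<bar> < \<epsilon>"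
proof -
  obtain m where "m > 0"
    and gap: "\<And>t. \<epsilon> \<le> \<bar>t - s0\<bar> \<Longrightarrow> \<bar>t - s0\<bar> \<le> P / 2 \<Longrightarrow> inner (\<gamma> t) (cis p0) + m \<le> inner (\<gamma> s0) (cis p0)"
    using support_gap[OF strict \<open>\<epsilon> > 0\<close>] by blast
  obtain R where "R > 0" and R: "\<And>t. norm (\<gamma> t) \<le> R"
    using bounded_range unfolding bounded_pos by auto
  have "isCont cis p0"
    using continuous_on_cis[OF continuous_on_id] continuous_on_eq_continuous_at[OF open_UNIV] by blast
  moreover have "m / (2 * R) > 0" using \<open>m > 0\<close> \<open>R > 0\<close> by simp
  ultimately have "\<exists>d>0. \<forall>p. dist p p0 < d \<longrightarrow> dist (cis p) (cis p0) < m / (2 * R)"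
    unfolding continuous_at_eps_delta by blast
  then obtain d where "d > 0" and d: "\<And>p. \<bar>p - p0\<bar> < d \<Longrightarrow> norm (cis p - cis p0) < m / (2 * R)"
    by (auto simp: dist_norm dist_real_def)
  have "\<bar>t - s0\<bar> < \<epsilon>" if p: "\<bar>p - p0\<bar> < d" and t: "\<bar>t - s0\<bar> \<le> P / 2"
    and max: "\<forall>u. inner (\<gamma> u) (cis p) \<le> inner (\<gamma> t) (cis p)" for p t
  proof (rule ccontr)
    assume "\<not> \<bar>t - s0\<bar> < \<epsilon>"
    then have "m \<le> inner (\<gamma> s0 - \<gamma> t) (cis p0)" using gap[of t] t by (simp add: inner_diff_left)
    also have "\<dots> = inner (\<gamma> s0 - \<gamma> t) (cis p) + inner (\<gamma> s0 - \<gamma> t) (cis p0 - cis p)"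
      by (simp add: inner_diff_right)
    also have "\<dots> \<le> 0 + norm (\<gamma> s0 - \<gamma> t) * norm (cis p0 - cis p)"
      using max by (intro add_mono norm_cauchy_schwarz) (simp add: inner_diff_left)
    also have "\<dots> \<le> 2 * R * norm (cis p - cis p0)"
      using norm_triangle_ineq4[of "\<gamma> s0" "\<gamma> t"] R[of s0] R[of t]
      by (simp add: norm_minus_commute mult_right_mono)
    also have "\<dots> < m" using d[OF p] \<open>R > 0\<close> by (simp add: field_simps)
    finally show False by simp
  qed
  then show ?thesis using \<open>d > 0\<close> by blast
qed

lemma uniform_Arg_unit_dir_ratio_small:
  assumes orb: "billiard_orbit \<gamma> \<gamma>' P s" and "finite A" and \<epsilon>_pos: "\<And>n. \<epsilon> n > 0"
  shows "\<exists>d>0. \<forall>n\<in>A. \<forall>a b. \<bar>a - s n\<bar> < d \<longrightarrow> \<bar>b - s (n + 1)\<bar> < d \<longrightarrow>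
           \<bar>Arg (unit_dir (\<gamma> a) (\<gamma> b) / unit_dir (\<gamma> (s n)) (\<gamma> (s (n + 1))))\<bar> < \<epsilon> n"
proof (rule ex_pos_uniform_finite[OF \<open>finite A\<close>])
  show "\<forall>n\<in>A. \<exists>d>0. \<forall>a b. \<bar>a - s n\<bar> < d \<longrightarrow> \<bar>b - s (n + 1)\<bar> < d \<longrightarrow>
           \<bar>Arg (unit_dir (\<gamma> a) (\<gamma> b) / unit_dir (\<gamma> (s n)) (\<gamma> (s (n + 1))))\<bar> < \<epsilon> n"
    using Arg_unit_dir_ratio_small[OF billiard_orbit_distinct[OF orb] \<epsilon>_pos] by blast
qed auto

lemma chord_angles_perturbation:
  assumes orb: "billiard_orbit \<gamma> \<gamma>' P s" and lift: "normal_lift \<gamma> s \<phi>" and "e > 0"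
  shows "\<exists>d>0. \<forall>x. (\<forall>n. n \<le> M \<or> N \<le> n \<longrightarrow> x n = s n) \<and> (\<forall>n. \<bar>x n - s n\<bar> < d) \<longrightarrow>
    (\<exists>y. (\<forall>n. n \<le> M - 1 \<or> N \<le> n \<longrightarrow> y n = \<phi> n) \<and> (\<forall>n. \<bar>y n - \<phi> n\<bar> < e) \<and>
         (\<forall>n. sin ((y (n + 1) - y n) / 2) \<ge> 0) \<and>
         (\<forall>n. \<gamma> (x n) \<noteq> \<gamma> (x (n + 1)) \<longrightarrow> \<i> * cis (y n) = unit_dir (\<gamma> (x n)) (\<gamma> (x (n + 1)))))"
proof -
  define gap where "gap n = min (\<phi> (n + 1) - \<phi> n) (2 * pi - (\<phi> (n + 1) - \<phi> n))" for n
  define \<epsilon> where "\<epsilon> n = min e (min (gap (n - 1)) (gap n) / 2)" for n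
  have \<phi>_gap: "0 < \<phi> (n + 1) - \<phi> n" "\<phi> (n + 1) - \<phi> n < 2 * pi" for n
    using lift[unfolded normal_lift_def, rule_format, of n] by auto
  then have "gap n > 0" for n by (simp add: gap_def)
  then have \<epsilon>_pos: "\<epsilon> n > 0" for n using \<open>e > 0\<close> by (simp add: \<epsilon>_def)
  have \<epsilon>_le_gap: "\<epsilon> n \<le> gap n / 2" "\<epsilon> (n + 1) \<le> gap n / 2" for n by (simp_all add: \<epsilon>_def)
  obtain d where "d > 0" and d: "\<And>n a b. n \<in> {M..<N} \<Longrightarrow> \<bar>a - s n\<bar> < d \<Longrightarrow> \<bar>b - s (n + 1)\<bar> < d \<Longrightarrow>
      \<bar>Arg (unit_dir (\<gamma> a) (\<gamma> b) / unit_dir (\<gamma> (s n)) (\<gamma> (s (n + 1))))\<bar> < \<epsilon> n"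
    using uniform_Arg_unit_dir_ratio_small[where \<epsilon> = \<epsilon>, OF orb finite_atLeastLessThan_int \<epsilon>_pos]
    by blast
  show ?thesis
  proof (intro exI[of _ d] conjI allI impI \<open>d > 0\<close>)
    fix x assume x: "(\<forall>n. n \<le> M \<or> N \<le> n \<longrightarrow> x n = s n) \<and> (\<forall>n. \<bar>x n - s n\<bar> < d)"
    define y where
      "y n = \<phi> n + Arg (unit_dir (\<gamma> (x n)) (\<gamma> (x (n + 1))) / unit_dir (\<gamma> (s n)) (\<gamma> (s (n + 1))))" for n
    have y_out: "y n = \<phi> n" if "n \<notin> {M..<N}" for n
    proof -
      have "x n = s n" "x (n + 1) = s (n + 1)" using x that by auto
      then show ?thesis using norm_unit_dir[OF billiard_orbit_distinct[OF orb, of n]] by (auto simp: y_def)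
    qed
    have y_near: "\<bar>y n - \<phi> n\<bar> < \<epsilon> n" for n
      using d[of n "x n" "x (n + 1)"] x y_out[of n] \<epsilon>_pos[of n] by (cases "n \<in> {M..<N}") (auto simp: y_def)
    show "\<exists>y. (\<forall>n. n \<le> M - 1 \<or> N \<le> n \<longrightarrow> y n = \<phi> n) \<and> (\<forall>n. \<bar>y n - \<phi> n\<bar> < e) \<and>
         (\<forall>n. sin ((y (n + 1) - y n) / 2) \<ge> 0) \<and>
         (\<forall>n. \<gamma> (x n) \<noteq> \<gamma> (x (n + 1)) \<longrightarrow> \<i> * cis (y n) = unit_dir (\<gamma> (x n)) (\<gamma> (x (n + 1))))"
    proof (intro exI[of _ y] conjI allI impI)
      show "y n = \<phi> n" if "n \<le> M - 1 \<or> N \<le> n" for n using that y_out by auto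
      show "\<bar>y n - \<phi> n\<bar> < e" for n using y_near[of n] by (simp add: \<epsilon>_def)
      show "\<i> * cis (y n) = unit_dir (\<gamma> (x n)) (\<gamma> (x (n + 1)))" if "\<gamma> (x n) \<noteq> \<gamma> (x (n + 1))" for n
        unfolding y_def by (rule normal_lift_rotate[OF lift that])
      show "sin ((y (n + 1) - y n) / 2) \<ge> 0" for n
        using \<phi>_gap[of n] \<epsilon>_le_gap[of n] y_near[of n] y_near[of "n + 1"]
        by (intro sin_half_diff_nonneg_near[where a = "\<phi> n" and b = "\<phi> (n + 1)"])
          (simp_all add: gap_def)
    qed
  qed
qed

lemma support_point_within_half_period:
  "\<exists>t. \<bar>t - s0\<bar> \<le> P / 2 \<and> (\<forall>u. inner (\<gamma> u) w \<le> inner (\<gamma> t) w)"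
proof -
  obtain t where "t \<in> {s0 - P / 2..s0 - P / 2 + P}" and "\<forall>u. inner (\<gamma> u) w \<le> inner (\<gamma> t) w"
    using support_point_exists by blast
  moreover from this(1) have "\<bar>t - s0\<bar> \<le> P / 2" by (simp only: atLeastAtMost_iff) arith
  ultimately show ?thesis by blast
qed

lemma uniform_support_point_near:
  assumes orb: "billiard_orbit \<gamma> \<gamma>' P s" and lift: "normal_lift \<gamma> s \<phi>"
    and "finite A" and "e > 0"
  shows "\<exists>d>0. \<forall>n\<in>A. \<forall>p t. \<bar>p - (\<phi> n + \<phi> (n + 1)) / 2\<bar> < d \<longrightarrow> \<bar>t - s (n + 1)\<bar> \<le> P / 2 \<longrightarrow>
           (\<forall>u. inner (\<gamma> u) (cis p) \<le> inner (\<gamma> t) (cis p)) \<longrightarrow> \<bar>t - s (n + 1)\<bar> < e"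
proof (rule ex_pos_uniform_finite[OF \<open>finite A\<close>])
  show "\<forall>n\<in>A. \<exists>d>0. \<forall>p t. \<bar>p - (\<phi> n + \<phi> (n + 1)) / 2\<bar> < d \<longrightarrow> \<bar>t - s (n + 1)\<bar> \<le> P / 2 \<longrightarrow>
           (\<forall>u. inner (\<gamma> u) (cis p) \<le> inner (\<gamma> t) (cis p)) \<longrightarrow> \<bar>t - s (n + 1)\<bar> < e"
    using support_point_near[OF reflection_point_strict_support[OF orb lift] \<open>e > 0\<close>] by blast
qed (meson less_le_trans)

lemma support_points_perturbation:
  assumes orb: "billiard_orbit \<gamma> \<gamma>' P s" and lift: "normal_lift \<gamma> s \<phi>" and "e > 0"
  shows "\<exists>d>0. \<forall>y. (\<forall>n. n \<le> M \<or> N \<le> n \<longrightarrow> y n = \<phi> n) \<and> (\<forall>n. \<bar>y n - \<phi> n\<bar> < d) \<longrightarrow>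
    (\<exists>x. (\<forall>n. n \<le> M \<or> N + 1 \<le> n \<longrightarrow> x n = s n) \<and> (\<forall>n. \<bar>x n - s n\<bar> < e) \<and>
         (\<forall>n\<in>{M..<N}. \<forall>u. inner (\<gamma> u) (cis ((y n + y (n + 1)) / 2))
                             \<le> inner (\<gamma> (x (n + 1))) (cis ((y n + y (n + 1)) / 2))))"
proof -
  obtain d where "d > 0" and d: "\<And>n p t. n \<in> {M..<N} \<Longrightarrow> \<bar>p - (\<phi> n + \<phi> (n + 1)) / 2\<bar> < d \<Longrightarrow>
      \<bar>t - s (n + 1)\<bar> \<le> P / 2 \<Longrightarrow> (\<forall>u. inner (\<gamma> u) (cis p) \<le> inner (\<gamma> t) (cis p)) \<Longrightarrow>
      \<bar>t - s (n + 1)\<bar> < e"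
    using uniform_support_point_near[OF orb lift finite_atLeastLessThan_int \<open>e > 0\<close>] by blast
  show ?thesis
  proof (intro exI[of _ d] conjI allI impI \<open>d > 0\<close>)
    fix y assume y: "(\<forall>n. n \<le> M \<or> N \<le> n \<longrightarrow> y n = \<phi> n) \<and> (\<forall>n. \<bar>y n - \<phi> n\<bar> < d)"
    define \<psi> where "\<psi> n = (y n + y (n + 1)) / 2" for n
    have "\<exists>t. \<bar>t - s (n + 1)\<bar> \<le> P / 2 \<and> (\<forall>u. inner (\<gamma> u) (cis (\<psi> n)) \<le> inner (\<gamma> t) (cis (\<psi> n)))" for n
      by (rule support_point_within_half_period)
    then obtain t where t: "\<And>n. \<bar>t n - s (n + 1)\<bar> \<le> P / 2"
      and t_max: "\<And>n u. inner (\<gamma> u) (cis (\<psi> n)) \<le> inner (\<gamma> (t n)) (cis (\<psi> n))"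
      using choice[of "\<lambda>n t. \<bar>t - s (n + 1)\<bar> \<le> P / 2 \<and> (\<forall>u. inner (\<gamma> u) (cis (\<psi> n)) \<le> inner (\<gamma> t) (cis (\<psi> n)))"]
      by blast
    define x where "x n = (if M < n \<and> n \<le> N then t (n - 1) else s n)" for n
    show "\<exists>x. (\<forall>n. n \<le> M \<or> N + 1 \<le> n \<longrightarrow> x n = s n) \<and> (\<forall>n. \<bar>x n - s n\<bar> < e) \<and>
         (\<forall>n\<in>{M..<N}. \<forall>u. inner (\<gamma> u) (cis ((y n + y (n + 1)) / 2))
                             \<le> inner (\<gamma> (x (n + 1))) (cis ((y n + y (n + 1)) / 2)))"
    proof (intro exI[of _ x] conjI allI impI ballI)
      show "x n = s n" if "n \<le> M \<or> N + 1 \<le> n" for n using that by (auto simp: x_def)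
      show "\<bar>x n - s n\<bar> < e" for n
      proof (cases "M < n \<and> n \<le> N")
        case True
        have "\<bar>y (n - 1) - \<phi> (n - 1)\<bar> < d" "\<bar>y n - \<phi> n\<bar> < d" using y by blast+
        then have "\<bar>\<psi> (n - 1) - (\<phi> (n - 1) + \<phi> n) / 2\<bar> < d"
          unfolding \<psi>_def by (simp add: abs_less_iff field_simps)
        then show ?thesis
          using d[of "n - 1" "\<psi> (n - 1)" "t (n - 1)"] True t[of "n - 1"] t_max by (simp add: x_def)
      qed (use \<open>e > 0\<close> in \<open>auto simp: x_def\<close>)
      show "inner (\<gamma> u) (cis ((y n + y (n + 1)) / 2)) \<le> inner (\<gamma> (x (n + 1))) (cis ((y n + y (n + 1)) / 2))"
        if "n \<in> {M..<N}" for n u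
        using that t_max[of u n] by (simp add: x_def \<psi>_def)
    qed
  qed
qed

lemma m_config_L_gen_of_S_gen:
  assumes orb: "billiard_orbit \<gamma> \<gamma>' P s" and lift: "normal_lift \<gamma> s \<phi>"
    and "m_config (S_gen \<gamma>) \<phi>"
  shows "m_config (L_gen \<gamma>) s"
  unfolding m_config_def
proof (intro allI impI)
  fix M N :: int assume "M < N"
  then have "M - 1 < N" "M \<le> N" by simp_all
  then obtain e where "e > 0" and S_max: "\<forall>y. (\<forall>n. n \<le> M - 1 \<or> N \<le> n \<longrightarrow> y n = \<phi> n) \<and>
      (\<forall>n. \<bar>y n - \<phi> n\<bar> < e) \<longrightarrow>
      (\<Sum>n\<in>{M - 1..<N}. S_gen \<gamma> (y n) (y (n + 1))) \<le> (\<Sum>n\<in>{M - 1..<N}. S_gen \<gamma> (\<phi> n) (\<phi> (n + 1)))"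
    using assms(3) unfolding m_config_def by blast
  obtain d where "d > 0" and perturb: "\<forall>x. (\<forall>n. n \<le> M \<or> N \<le> n \<longrightarrow> x n = s n) \<and> (\<forall>n. \<bar>x n - s n\<bar> < d) \<longrightarrow>
    (\<exists>y. (\<forall>n. n \<le> M - 1 \<or> N \<le> n \<longrightarrow> y n = \<phi> n) \<and> (\<forall>n. \<bar>y n - \<phi> n\<bar> < e) \<and>
         (\<forall>n. sin ((y (n + 1) - y n) / 2) \<ge> 0) \<and>
         (\<forall>n. \<gamma> (x n) \<noteq> \<gamma> (x (n + 1)) \<longrightarrow> \<i> * cis (y n) = unit_dir (\<gamma> (x n)) (\<gamma> (x (n + 1)))))"
    using chord_angles_perturbation[OF orb lift \<open>e > 0\<close>] by blast
  show "\<exists>d>0. \<forall>x. (\<forall>n. n \<le> M \<or> N \<le> n \<longrightarrow> x n = s n) \<and> (\<forall>n. \<bar>x n - s n\<bar> < d) \<longrightarrow>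
      (\<Sum>n\<in>{M..<N}. L_gen \<gamma> (x n) (x (n + 1))) \<le> (\<Sum>n\<in>{M..<N}. L_gen \<gamma> (s n) (s (n + 1)))"
  proof (intro exI[of _ d] conjI allI impI \<open>d > 0\<close>)
    fix x assume x: "(\<forall>n. n \<le> M \<or> N \<le> n \<longrightarrow> x n = s n) \<and> (\<forall>n. \<bar>x n - s n\<bar> < d)"
    then obtain y where y_out: "\<forall>n. n \<le> M - 1 \<or> N \<le> n \<longrightarrow> y n = \<phi> n"
      and y_near: "\<forall>n. \<bar>y n - \<phi> n\<bar> < e" and y_sin: "\<forall>n. sin ((y (n + 1) - y n) / 2) \<ge> 0"
      and y_chord: "\<forall>n. \<gamma> (x n) \<noteq> \<gamma> (x (n + 1)) \<longrightarrow> \<i> * cis (y n) = unit_dir (\<gamma> (x n)) (\<gamma> (x (n + 1)))"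
      using perturb by blast
    have ends: "x M = s M" "x N = s N" "y (M - 1) = \<phi> (M - 1)" "y N = \<phi> N" using x y_out by auto
    have S_le: "(\<Sum>n\<in>{M - 1..<N}. S_gen \<gamma> (y n) (y (n + 1))) \<le> (\<Sum>n\<in>{M - 1..<N}. S_gen \<gamma> (\<phi> n) (\<phi> (n + 1)))"
      using S_max y_out y_near by blast
    have "(\<Sum>n\<in>{M..<N}. L_gen \<gamma> (x n) (x (n + 1)))
        \<le> (\<Sum>n\<in>{M - 1..<N}. S_gen \<gamma> (y n) (y (n + 1))) - dir_coord \<gamma> (x M) (y (M - 1)) + dir_coord \<gamma> (x N) (y N)"
      using y_chord y_sin by (intro sum_L_gen_le_sum_S_gen[OF \<open>M \<le> N\<close> bdd_above_inner]) auto
    also have "\<dots> \<le> (\<Sum>n\<in>{M - 1..<N}. S_gen \<gamma> (\<phi> n) (\<phi> (n + 1))) - dir_coord \<gamma> (s M) (\<phi> (M - 1)) + dir_coord \<gamma> (s N) (\<phi> N)"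
      using S_le unfolding ends by simp
    also have "\<dots> = (\<Sum>n\<in>{M..<N}. L_gen \<gamma> (s n) (s (n + 1)))"
      by (rule sum_L_gen_eq_sum_S_gen[symmetric])
        (use \<open>M \<le> N\<close> normal_lift_unit_dir[OF lift] reflection_point_support[OF orb lift] in auto)
    finally show "(\<Sum>n\<in>{M..<N}. L_gen \<gamma> (x n) (x (n + 1))) \<le> (\<Sum>n\<in>{M..<N}. L_gen \<gamma> (s n) (s (n + 1)))" .
  qed
qed

lemma m_config_S_gen_of_L_gen:
  assumes orb: "billiard_orbit \<gamma> \<gamma>' P s" and lift: "normal_lift \<gamma> s \<phi>"
    and "m_config (L_gen \<gamma>) s"
  shows "m_config (S_gen \<gamma>) \<phi>"
  unfolding m_config_def
proof (intro allI impI)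
  fix M N :: int assume "M < N"
  then have "M < N + 1" "M \<le> N" by simp_all
  then obtain e where "e > 0" and L_max: "\<forall>x. (\<forall>n. n \<le> M \<or> N + 1 \<le> n \<longrightarrow> x n = s n) \<and>
      (\<forall>n. \<bar>x n - s n\<bar> < e) \<longrightarrow>
      (\<Sum>n\<in>{M..<N + 1}. L_gen \<gamma> (x n) (x (n + 1))) \<le> (\<Sum>n\<in>{M..<N + 1}. L_gen \<gamma> (s n) (s (n + 1)))"
    using assms(3) unfolding m_config_def by blast
  obtain d where "d > 0" and perturb: "\<forall>y. (\<forall>n. n \<le> M \<or> N \<le> n \<longrightarrow> y n = \<phi> n) \<and> (\<forall>n. \<bar>y n - \<phi> n\<bar> < d) \<longrightarrow>
    (\<exists>x. (\<forall>n. n \<le> M \<or> N + 1 \<le> n \<longrightarrow> x n = s n) \<and> (\<forall>n. \<bar>x n - s n\<bar> < e) \<and>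
         (\<forall>n\<in>{M..<N}. \<forall>u. inner (\<gamma> u) (cis ((y n + y (n + 1)) / 2))
                             \<le> inner (\<gamma> (x (n + 1))) (cis ((y n + y (n + 1)) / 2))))"
    using support_points_perturbation[OF orb lift \<open>e > 0\<close>] by blast
  show "\<exists>d>0. \<forall>y. (\<forall>n. n \<le> M \<or> N \<le> n \<longrightarrow> y n = \<phi> n) \<and> (\<forall>n. \<bar>y n - \<phi> n\<bar> < d) \<longrightarrow>
      (\<Sum>n\<in>{M..<N}. S_gen \<gamma> (y n) (y (n + 1))) \<le> (\<Sum>n\<in>{M..<N}. S_gen \<gamma> (\<phi> n) (\<phi> (n + 1)))"
  proof (intro exI[of _ d] conjI allI impI \<open>d > 0\<close>)
    fix y assume y: "(\<forall>n. n \<le> M \<or> N \<le> n \<longrightarrow> y n = \<phi> n) \<and> (\<forall>n. \<bar>y n - \<phi> n\<bar> < d)"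
    then obtain x where x_out: "\<forall>n. n \<le> M \<or> N + 1 \<le> n \<longrightarrow> x n = s n"
      and x_near: "\<forall>n. \<bar>x n - s n\<bar> < e"
      and x_support: "\<forall>n\<in>{M..<N}. \<forall>u. inner (\<gamma> u) (cis ((y n + y (n + 1)) / 2))
                             \<le> inner (\<gamma> (x (n + 1))) (cis ((y n + y (n + 1)) / 2))"
      using perturb by blast
    have ends: "x M = s M" "x (N + 1) = s (N + 1)" "y M = \<phi> M" "y N = \<phi> N" using x_out y by auto
    have L_le: "(\<Sum>n\<in>{M..<N + 1}. L_gen \<gamma> (x n) (x (n + 1))) \<le> (\<Sum>n\<in>{M..<N + 1}. L_gen \<gamma> (s n) (s (n + 1)))"
      using L_max x_out x_near by blast
    have "(\<Sum>n\<in>{M..<N}. S_gen \<gamma> (y n) (y (n + 1)))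
        \<le> (\<Sum>n\<in>{M..<N + 1}. L_gen \<gamma> (x n) (x (n + 1))) + dir_coord \<gamma> (x M) (y M) - dir_coord \<gamma> (x (N + 1)) (y N)"
      using x_support by (intro sum_S_gen_le_sum_L_gen[OF \<open>M \<le> N\<close>]) auto
    also have "\<dots> \<le> (\<Sum>n\<in>{M..<N + 1}. L_gen \<gamma> (s n) (s (n + 1))) + dir_coord \<gamma> (s M) (\<phi> M) - dir_coord \<gamma> (s (N + 1)) (\<phi> N)"
      using L_le unfolding ends by simp
    also have "\<dots> = (\<Sum>n\<in>{M..<N}. S_gen \<gamma> (\<phi> n) (\<phi> (n + 1)))"
      by (rule sum_S_gen_eq_sum_L_gen[symmetric])
        (use \<open>M \<le> N\<close> normal_lift_unit_dir[OF lift] reflection_point_support[OF orb lift] in auto)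
    finally show "(\<Sum>n\<in>{M..<N}. S_gen \<gamma> (y n) (y (n + 1))) \<le> (\<Sum>n\<in>{M..<N}. S_gen \<gamma> (\<phi> n) (\<phi> (n + 1)))" .
  qed
qed

lemma m_config_L_gen_iff_S_gen:
  assumes "billiard_orbit \<gamma> \<gamma>' P s" and "normal_lift \<gamma> s \<phi>"
  shows "m_config (L_gen \<gamma>) s \<longleftrightarrow> m_config (S_gen \<gamma>) \<phi>"
  using m_config_L_gen_of_S_gen[OF assms] m_config_S_gen_of_L_gen[OF assms] by blast

end

theorem theorem2p3:
  fixes \<gamma> \<gamma>' \<gamma>'' :: "real \<Rightarrow> complex" and P :: real
  assumes "P > 0"
    and "\<forall>t. (\<gamma> has_vector_derivative \<gamma>' t) (at t)"
    and "\<forall>t. (\<gamma>' has_vector_derivative \<gamma>'' t) (at t)"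
    and "continuous_on UNIV \<gamma>''"
    and "\<forall>t. norm (\<gamma>' t) = 1"
    and "\<forall>t. \<gamma> (t + P) = \<gamma> t"
    and "inj_on \<gamma> {0..<P}"
    and "\<forall>s t. \<gamma> t \<noteq> \<gamma> s \<longrightarrow> Im (cnj (\<gamma>' s) * (\<gamma> t - \<gamma> s)) > 0"
    and "0 \<in> interior (convex hull (range \<gamma>))"
  shows "M_L \<gamma> \<gamma>' P = M_S \<gamma> \<gamma>' P"
proof -
  \<comment> \<open>only continuity of gamma is used: neither the second derivative nor the position of
     the origin (which shifts S by a telescoping term) plays a role\<close>
  have "continuous_on UNIV \<gamma>"
    using assms(2) has_vector_derivative_continuous continuous_at_imp_continuous_on by blast
  then interpret convex_billiard_table \<gamma> \<gamma>' P
    using assms(1,5-8) by unfold_locales auto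
  show ?thesis
  proof (intro equalityI subsetI)
    fix l assume "l \<in> M_L \<gamma> \<gamma>' P"
    then obtain s n where "l = oriented_line (\<gamma> (s n)) (\<gamma> (s (n + 1)))"
      and orb: "billiard_orbit \<gamma> \<gamma>' P s" and "m_config (L_gen \<gamma>) s"
      unfolding M_L_def by blast
    moreover obtain \<phi> where "normal_lift \<gamma> s \<phi>" using normal_lift_exists[OF orb] by blast
    ultimately show "l \<in> M_S \<gamma> \<gamma>' P"
      unfolding M_S_def using m_config_L_gen_iff_S_gen by (auto simp: normal_lift_def)
  next
    fix l assume "l \<in> M_S \<gamma> \<gamma>' P"
    then obtain s \<phi> n where "l = oriented_line (\<gamma> (s n)) (\<gamma> (s (n + 1)))"
      and "billiard_orbit \<gamma> \<gamma>' P s" and "normal_lift \<gamma> s \<phi>" and "m_config (S_gen \<gamma>) \<phi>"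
      unfolding M_S_def normal_lift_def by blast
    then show "l \<in> M_L \<gamma> \<gamma>' P" unfolding M_L_def using m_config_L_gen_iff_S_gen by blast
  qed
qed

end
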